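(* Let $b>0$, $m\ge 0$ with $b^2>4m$, $\alpha>0$, $\lambda\in\mathbb{R}\setminus\{0\}$, $k\in\mathbb{N}_0^n$, and $\mu_k=2|k|+n$. Let $a_0,a_1\in\mathbb{C}$ and let $w(t)$ solve $$w''(t)+bw'(t)+(|\lambda|^\alpha\mu_k^\alpha+m)w(t)=0\ (t>0),\qquad w(0)=a_0,\ w'(0)=a_1.$$ Then, with implicit constants independent of $t,\lambda,k,a_0,a_1$: 1. If $|\lambda|<\frac1{\mu_k}\left[\frac12\left(\frac{b^2}{4}-m\right)\right]^{1/\alpha}$, then $|w(t)|^2\lesssim e^{(-b+\sqrt{b^2-4m-4|\lambda|^\alpha\mu_k^\alpha})t}(|a_0|^2+|a_1|^2)$; and if $|\lambda|>\frac1{\mu_k}\left[\frac12\left(\frac{b^2}{4}-m\right)\right]^{1/\alpha}$, then $|w(t)|^2\lesssim e^{(-b+\sqrt{\frac12(b^2-4m)})t}(|a_0|^2+|a_1|^2)$. 2. If $|\lambda|<\frac1{\mu_k}\left[\frac12\left(\frac{b^2}{4}-m\right)\right]^{1/\alpha}$, then $$|w'(t)|^2\lesssim e^{(-b+\sqrt{b^2-4m-4|\lambda|^\alpha\mu_k^\alpha})t}(|\lambda|^\alpha\mu_k^\alpha+m)^2(|a_0|^2+|a_1|^2)+e^{(-b-\sqrt{b^2-4m-4|\lambda|^\alpha\mu_k^\alpha})t}|a_1|^2;$$ and if $|\lambda|>\frac1{\mu_k}\left[\frac12\left(\frac{b^2}{4}-m\right)\right]^{1/\alpha}$, then $|w'(t)|^2\lesssim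 e^{(-b+\sqrt{\frac12(b^2-4m)})t}\left((|\lambda|^\alpha\mu_k^\alpha+m)|a_0|^2+|a_1|^2\right)$. 3. If $|\lambda|<\frac1{\mu_k}\left[\frac12\left(\frac{b^2}{4}-m\right)\right]^{1/\alpha}$, then $|(|\lambda|\mu_k)^{\alpha/2}w(t)|^2\lesssim e^{(-b+\sqrt{b^2-4m-4|\lambda|^\alpha\mu_k^\alpha})t}(|\lambda|\mu_k)^\alpha(|a_0|^2+|a_1|^2)$; and if $|\lambda|>\frac1{\mu_k}\left[\frac12\left(\frac{b^2}{4}-m\right)\right]^{1/\alpha}$, then $|(|\lambda|\mu_k)^{\alpha/2}w(t)|^2\lesssim e^{(-b+\sqrt{\frac12(b^2-4m)})t}\left(|\lambda|^\alpha\mu_k^\alpha|a_0|^2+|a_1|^2\right)$.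
   Context: In the paper, $w(t)=\widehat{u}(t,\lambda)_{k,\ell}=(\widehat u(t,\lambda)e_k,e_\ell)_{L^2(\mathbb{R}^n)}$ are the Hermite matrix coefficients of the group Fourier transform of a solution of the linear fractional damped wave equation on $\mathbb{H}^n$, with $a_0=\widehat{u}_0(\lambda)_{k,\ell}$, $a_1=\widehat{u}_1(\lambda)_{k,\ell}$; $\mu_k=2|k|+n$ are the eigenvalues of the Hermite operator on $\mathbb{R}^n$. The lemma is a statement about the scalar ODE above. *)

theory Defs
  imports "HOL-Analysis.Analysis"
begin

definition hermite_mu :: "nat \<Rightarrow> nat list \<Rightarrow> real" where
  "hermite_mu n k = 2 * real (sum_list k) + real n"

definition damped_ode_sol ::
  "real \<Rightarrow> real \<Rightarrow> complex \<Rightarrow> complex \<Rightarrow> (real \<Rightarrow> complex) \<Rightarrow> (real \<Rightarrow> complex) \<Rightarrow> bool" where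
  "damped_ode_sol b q a0 a1 w w1 \<longleftrightarrow>
     w 0 = a0 \<and> w1 0 = a1 \<and>
     (\<forall>t\<ge>0. (w has_vector_derivative w1 t) (at t within {0..})) \<and>
     (\<forall>t>0. \<exists>w2. (w1 has_vector_derivative w2) (at t) \<and>
        w2 + complex_of_real b * w1 t + complex_of_real q * w t = 0)"

end

(*
  Put q = |lambda|^alpha mu_k^alpha + m and let r1, r2 be the roots of z^2 + b z + q with
  Re r2 <= Re r1. The solution is
    w(t) = e^(r1 t) (a0 + (a1 - r1 a0) G(t)),   w'(t) = r1 w(t) + (a1 - r1 a0) e^(r2 t),
  where G(t) is the integral of e^((r2 - r1) u) over [0, t], so |G(t)| <= min t (2 / |r2 - r1|).
  With s^2 = (b^2 - 4 m) / 2 the threshold on |lambda| is exactly b^2 - 4 q = s^2.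
  Below it the roots are real and at least s apart, so |G| <= 2 / s and w decays like e^(r1 t);
  the factor q^2 in the bound for w' comes from |r1| <= 2 q / b.
  Above it Re r1 <= (-b + s) / 2 and |r1| <= sqrt q, so the weighted energy q |w|^2 + |w'|^2
  decays like e^((-b + s) t) relative to q |a0|^2 + |a1|^2, the possible factor t coming from G
  being absorbed by the margin between the two exponents; since q is bounded below there, this
  gives the stated bounds.
*)
theory Submission
  imports Defs
begin

lemma power2_add_le:
  fixes x y :: real
  shows "(x + y)\<^sup>2 \<le> 2 * (x\<^sup>2 + y\<^sup>2)"
  using sum_squares_bound[of x y] by (simp add: power2_eq_square algebra_simps)

lemma power2_le_of_le_mult_add:
  fixes z c u v :: real
  assumes "0 \<le> z" and "z \<le> c * (u + v)"
  shows "z\<^sup>2 \<le> 2 * c\<^sup>2 * (u\<^sup>2 + v\<^sup>2)"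
proof -
  have "z\<^sup>2 \<le> (c * (u + v))\<^sup>2"
    using assms by (intro power_mono) auto
  also have "\<dots> \<le> c\<^sup>2 * (2 * (u\<^sup>2 + v\<^sup>2))"
    unfolding power_mult_distrib by (intro mult_left_mono power2_add_le) simp
  finally show ?thesis
    by (simp only: mult_ac)
qed

lemma exp_half_squared:
  fixes x :: real
  shows "(exp (x / 2))\<^sup>2 = exp x"
  by (simp flip: exp_double)

lemma sqrt_le_half_add_sqrt_abs:
  fixes b q :: real
  assumes "0 \<le> b" and "0 \<le> q"
  shows "sqrt q \<le> (b + sqrt \<bar>b\<^sup>2 - 4 * q\<bar>) / 2"
proof -
  have "4 * q \<le> b\<^sup>2 + (sqrt \<bar>b\<^sup>2 - 4 * q\<bar>)\<^sup>2"
    using abs_ge_minus_self[of "b\<^sup>2 - 4 * q"] by simp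
  also have "\<dots> \<le> (b + sqrt \<bar>b\<^sup>2 - 4 * q\<bar>)\<^sup>2"
    using \<open>0 \<le> b\<close> by (simp add: power2_eq_square algebra_simps)
  finally have "sqrt (4 * q) \<le> b + sqrt \<bar>b\<^sup>2 - 4 * q\<bar>"
    using \<open>0 \<le> b\<close> by (intro real_le_lsqrt) auto
  then show ?thesis by (simp add: real_sqrt_mult)
qed

(* Either \<sigma> \<le> s / 2, and the linear growth g \<le> t is absorbed by exp ((s - \<sigma>) t / 2),
   or \<sigma> > s / 2 and g \<le> 2 / \<sigma> < 4 / s. *)
lemma exp_mult_one_plus_le:
  fixes s \<sigma> t g :: real
  assumes s: "0 < s" and "0 \<le> \<sigma>" and "\<sigma> \<le> s" and "0 \<le> t"
    and "0 \<le> g" and "g \<le> t" and "\<sigma> * g \<le> 2"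
  shows "exp (\<sigma> * t / 2) * (1 + g) \<le> (1 + 4 / s) * exp (s * t / 2)"
proof (cases "\<sigma> \<le> s / 2")
  case True
  have "s * t / 4 \<le> exp (s * t / 4)"
    using exp_ge_add_one_self[of "s * t / 4"] by linarith
  then have "t \<le> 4 / s * exp (s * t / 4)"
    using s by (simp add: field_simps)
  with \<open>g \<le> t\<close> have "g \<le> 4 / s * exp (s * t / 4)"
    by linarith
  moreover have "1 \<le> exp (s * t / 4)"
    using s \<open>0 \<le> t\<close> by simp
  ultimately have "1 + g \<le> 1 * exp (s * t / 4) + 4 / s * exp (s * t / 4)"
    by linarith
  then have "1 + g \<le> (1 + 4 / s) * exp (s * t / 4)"
    by (simp only: distrib_right)
  moreover have "\<sigma> * t \<le> s / 2 * t"
    using True \<open>0 \<le> t\<close> by (rule mult_right_mono)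
  then have "exp (\<sigma> * t / 2) \<le> exp (s * t / 4)"
    by simp
  ultimately have "exp (\<sigma> * t / 2) * (1 + g) \<le> exp (s * t / 4) * ((1 + 4 / s) * exp (s * t / 4))"
    using \<open>0 \<le> g\<close> by (intro mult_mono) auto
  also have "\<dots> = (1 + 4 / s) * exp (s * t / 2)"
    by (simp flip: exp_add)
  finally show ?thesis .
next
  case False
  have "g * (s / 2) \<le> g * \<sigma>"
    using False \<open>0 \<le> g\<close> by (intro mult_left_mono) auto
  with \<open>\<sigma> * g \<le> 2\<close> s have "1 + g \<le> 1 + 4 / s"
    by (simp add: field_simps)
  moreover have "exp (\<sigma> * t / 2) \<le> exp (s * t / 2)"
    using \<open>\<sigma> \<le> s\<close> \<open>0 \<le> t\<close> by (simp add: mult_right_mono)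
  ultimately show ?thesis
    using \<open>0 \<le> g\<close> by (subst mult.commute) (intro mult_mono, auto)
qed

section \<open>The primitive of an exponential\<close>

lemma has_vector_derivative_cexp_real:
  fixes r :: complex
  shows "((\<lambda>t. exp (r * of_real t)) has_vector_derivative r * exp (r * of_real t)) (at t within S)"
proof -
  have "((\<lambda>z. exp (r * z)) has_field_derivative r * exp (r * of_real t)) (at (of_real t))"
    by (auto intro!: derivative_eq_intros)
  from has_vector_derivative_real_field[OF this] show ?thesis by simp
qed

(* The integral of u \<mapsto> exp (d * u) over [0, t]. *)
definition exp_primitive :: "complex \<Rightarrow> real \<Rightarrow> complex" where
  "exp_primitive d t = (if d = 0 then of_real t else (exp (d * of_real t) - 1) / d)"

lemma exp_primitive_0 [simp]: "exp_primitive d 0 = 0"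
  by (simp add: exp_primitive_def)

lemma exp_primitive_has_vector_derivative:
  "(exp_primitive d has_vector_derivative exp (d * of_real t)) (at t within S)"
proof -
  have "((\<lambda>z. if d = 0 then z else (exp (d * z) - 1) / d) has_field_derivative exp (d * of_real t))
          (at (of_real t))"
    by (cases "d = 0") (auto intro!: derivative_eq_intros)
  from has_vector_derivative_real_field[OF this] show ?thesis
    by (simp add: exp_primitive_def [abs_def] if_distrib)
qed

lemma norm_exp_primitive_le:
  assumes "Re d \<le> 0" and "0 \<le> t"
  shows "norm (exp_primitive d t) \<le> t"
proof -
  have "norm (exp_primitive d t - exp_primitive d 0) \<le> 1 * norm (t - 0)"
  proof (rule differentiable_bound[where S = "{0..t}"])
    fix x assume "x \<in> {0..t}"
    have "norm (exp (d * of_real x)) \<le> 1"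
      using \<open>Re d \<le> 0\<close> \<open>x \<in> {0..t}\<close> by (simp add: mult_nonpos_nonneg)
    then show "onorm (\<lambda>h. h *\<^sub>R exp (d * of_real x)) \<le> 1"
      by (simp add: onorm_scaleR_left onorm_id)
  next
    fix x show "(exp_primitive d has_derivative (\<lambda>h. h *\<^sub>R exp (d * of_real x))) (at x within {0..t})"
      using exp_primitive_has_vector_derivative by (simp add: has_vector_derivative_def)
  qed (use \<open>0 \<le> t\<close> in auto)
  with \<open>0 \<le> t\<close> show ?thesis by simp
qed

lemma norm_mult_exp_primitive_le:
  assumes "Re d \<le> 0" and "0 \<le> t"
  shows "norm d * norm (exp_primitive d t) \<le> 2"
proof (cases "d = 0")
  case False
  have "norm (exp (d * of_real t) - 1) \<le> norm (exp (d * of_real t)) + 1"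
    using norm_triangle_ineq4[of "exp (d * of_real t)" 1] by (simp only: norm_one)
  also have "\<dots> \<le> 2"
    using assms by (simp add: mult_nonpos_nonneg)
  finally have "norm (exp (d * of_real t) - 1) \<le> 2" .
  with False show ?thesis by (simp add: exp_primitive_def norm_divide)
qed simp

lemma exp_mult_exp_primitive_has_vector_derivative:
  fixes r1 r2 d k :: complex
  shows "((\<lambda>x. exp (r1 * of_real x) * (d + k * exp_primitive (r2 - r1) x)) has_vector_derivative
           r1 * (exp (r1 * of_real x) * (d + k * exp_primitive (r2 - r1) x)) + k * exp (r2 * of_real x))
           (at x)"
proof -
  have "r1 * of_real x + (r2 - r1) * of_real x = r2 * of_real x"
    by (simp add: algebra_simps)
  then have exp_r2: "exp (r2 * of_real x) = exp (r1 * of_real x) * exp ((r2 - r1) * of_real x)"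
    by (metis exp_add)
  have "((\<lambda>x. d + k * exp_primitive (r2 - r1) x) has_vector_derivative
      0 + k * exp ((r2 - r1) * of_real x)) (at x)"
    by (intro has_vector_derivative_add has_vector_derivative_const
        has_vector_derivative_mult_right exp_primitive_has_vector_derivative)
  then have "((\<lambda>x. exp (r1 * of_real x) * (d + k * exp_primitive (r2 - r1) x)) has_vector_derivative
      exp (r1 * of_real x) * (0 + k * exp ((r2 - r1) * of_real x))
      + r1 * exp (r1 * of_real x) * (d + k * exp_primitive (r2 - r1) x)) (at x)"
    by (intro has_vector_derivative_mult has_vector_derivative_cexp_real)
  then show ?thesis
    unfolding exp_r2 by (simp add: algebra_simps)
qed

section \<open>Explicit solution of the damped equation\<close>

lemma linear_ode_solutions_differ_by_exp:
  fixes y Y h :: "real \<Rightarrow> complex"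
  assumes y: "\<And>x. 0 < x \<Longrightarrow> (y has_vector_derivative r * y x + h x) (at x)"
    and Y: "\<And>x. 0 < x \<Longrightarrow> (Y has_vector_derivative r * Y x + h x) (at x)"
  obtains k where "\<And>x. 0 < x \<Longrightarrow> y x = Y x + k * exp (r * of_real x)"
proof -
  define z where "z x = (y x - Y x) * exp (- r * of_real x)" for x
  have "(z has_derivative (\<lambda>_. 0)) (at x)" if "0 < x" for x
  proof -
    have "(z has_vector_derivative
            (y x - Y x) * (- r * exp (- r * of_real x))
            + (r * y x + h x - (r * Y x + h x)) * exp (- r * of_real x)) (at x)"
      unfolding z_def [abs_def]
      by (intro has_vector_derivative_mult has_vector_derivative_diff y Y that
          has_vector_derivative_cexp_real)
    then show ?thesis
      by (simp add: has_vector_derivative_def algebra_simps)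
  qed
  then have "z x = z 1" if "0 < x" for x
    using that by (intro has_derivative_zero_unique_connected[of "{0<..}"]) auto
  then have "y x = Y x + z 1 * exp (r * of_real x)" if "0 < x" for x
    using that by (auto simp: z_def exp_minus field_simps)
  then show ?thesis by (rule that)
qed

(* The equation is imposed only for t > 0, so the initial data are attached to an explicit
   solution through one-sided continuity and the one-sided derivative at 0. *)
lemma eq_on_nonneg_if_eq_on_pos:
  fixes w w1 F F' :: "real \<Rightarrow> complex"
  assumes w: "\<forall>t\<ge>0. (w has_vector_derivative w1 t) (at t within {0..})"
    and eq: "\<And>t. 0 < t \<Longrightarrow> w t = F t"
    and F: "\<And>t. (F has_vector_derivative F' t) (at t)"
    and "0 \<le> t"
  shows "w t = F t" and "w1 t = F' t"
proof -
  have nontrivial: "at x within {0..} \<noteq> bot" if "0 \<le> x" for x :: real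
  proof -
    have "x islimpt {x..x + 1}" by simp
    then have "x islimpt {0..}" by (rule islimpt_subset) (use that in auto)
    then show ?thesis by (simp add: trivial_limit_within)
  qed
  have "w 0 = F 0"
  proof (rule tendsto_unique[OF nontrivial[of 0]])
    have "continuous (at 0 within {0..}) w"
      using w has_vector_derivative_continuous[of w "w1 0" 0 "{0..}"] by simp
    then show "(w \<longlongrightarrow> w 0) (at 0 within {0..})"
      by (simp add: continuous_within)
    have "continuous (at 0 within {0..}) F"
      using has_vector_derivative_continuous[OF F] by (rule continuous_at_imp_continuous_at_within)
    then have "(F \<longlongrightarrow> F 0) (at 0 within {0..})"
      by (simp add: continuous_within)
    moreover have "eventually (\<lambda>x. F x = w x) (at 0 within {0..})"
      using eq by (auto simp: eventually_at_filter)
    ultimately show "(w \<longlongrightarrow> F 0) (at 0 within {0..})"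
      by (rule Lim_transform_eventually)
  qed (simp)
  then have w_eq_F: "w x = F x" if "0 \<le> x" for x
    using that eq by (cases "x = 0") auto
  then show "w t = F t" using \<open>0 \<le> t\<close> .
  have "(w has_vector_derivative F' t) (at t within {0..})"
    by (rule has_vector_derivative_transform[where f = F])
      (use \<open>0 \<le> t\<close> w_eq_F has_vector_derivative_at_within[OF F] in auto)
  with w \<open>0 \<le> t\<close> show "w1 t = F' t"
    using vector_derivative_unique_within[OF nontrivial] by blast
qed

lemma damped_ode_sol_has_vector_derivative:
  assumes "damped_ode_sol b q a0 a1 w w1" and "0 < x"
  shows "(w has_vector_derivative w1 x) (at x)"
proof -
  have "at x within {0..} = at x"
    using \<open>0 < x\<close> by (intro at_within_open_subset[of x "{0<..}"]) auto
  with assms show ?thesis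
    unfolding damped_ode_sol_def by (metis less_imp_le)
qed

lemma damped_ode_sol_factor:
  fixes r1 r2 :: complex
  assumes sum: "r1 + r2 = - of_real b" and prod: "r1 * r2 = of_real q"
    and sol: "damped_ode_sol b q a0 a1 w w1" and "0 < x"
  shows "((\<lambda>x. w1 x - r1 * w x) has_vector_derivative r2 * (w1 x - r1 * w x)) (at x)"
proof -
  obtain w2 where w2: "(w1 has_vector_derivative w2) (at x)"
    and ode: "w2 + of_real b * w1 x + of_real q * w x = 0"
    using sol \<open>0 < x\<close> unfolding damped_ode_sol_def by blast
  have b_eq: "of_real b = - (r1 + r2)"
    using sum by simp
  have "w2 = - (of_real b * w1 x + of_real q * w x)"
    using ode by (simp only: add.assoc add_eq_0_iff2)
  then have "w2 - r1 * w1 x = r2 * (w1 x - r1 * w x)"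
    unfolding prod [symmetric] b_eq by (simp add: algebra_simps)
  moreover have "((\<lambda>x. w1 x - r1 * w x) has_vector_derivative w2 - r1 * w1 x) (at x)"
    by (intro has_vector_derivative_diff has_vector_derivative_mult_right w2
        damped_ode_sol_has_vector_derivative[OF sol \<open>0 < x\<close>])
  ultimately show ?thesis
    by simp
qed

lemma damped_ode_sol_explicit:
  fixes r1 r2 :: complex
  assumes sum: "r1 + r2 = - of_real b" and prod: "r1 * r2 = of_real q"
    and sol: "damped_ode_sol b q a0 a1 w w1" and "0 \<le> t"
  shows "w t = exp (r1 * of_real t) * (a0 + (a1 - r1 * a0) * exp_primitive (r2 - r1) t)"
    and "w1 t = r1 * w t + (a1 - r1 * a0) * exp (r2 * of_real t)"
proof -
  define F where "F d k x = exp (r1 * of_real x) * (d + k * exp_primitive (r2 - r1) x)" for d k x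
  have F': "(F d k has_vector_derivative r1 * F d k x + k * exp (r2 * of_real x)) (at x)" for d k x
    unfolding F_def by (rule exp_mult_exp_primitive_has_vector_derivative)
  obtain k where v: "\<And>x. 0 < x \<Longrightarrow> w1 x - r1 * w x = 0 + k * exp (r2 * of_real x)"
  proof (rule linear_ode_solutions_differ_by_exp[where h = "\<lambda>_. 0" and Y = "\<lambda>_. 0"])
    show "((\<lambda>x. w1 x - r1 * w x) has_vector_derivative r2 * (w1 x - r1 * w x) + 0) (at x)"
      if "0 < x" for x
      using damped_ode_sol_factor[OF sum prod sol that] by simp
  qed auto
  obtain d where "\<And>x. 0 < x \<Longrightarrow> w x = F 0 k x + d * exp (r1 * of_real x)"
  proof (rule linear_ode_solutions_differ_by_exp[where h = "\<lambda>x. k * exp (r2 * of_real x)" and Y = "F 0 k"])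
    fix x :: real assume "0 < x"
    with v[of x] damped_ode_sol_has_vector_derivative[OF sol, of x]
    show "(w has_vector_derivative r1 * w x + k * exp (r2 * of_real x)) (at x)"
      by (simp add: algebra_simps)
  qed (use F' in auto)
  then have w_eq_F: "w x = F d k x" if "0 < x" for x
    using that by (simp add: F_def algebra_simps)
  have w': "\<forall>t\<ge>0. (w has_vector_derivative w1 t) (at t within {0..})"
    using sol unfolding damped_ode_sol_def by blast
  have "F d k 0 = a0" and "r1 * F d k 0 + k * exp (r2 * 0) = a1"
    using eq_on_nonneg_if_eq_on_pos[OF w' w_eq_F F', of 0] sol
    unfolding damped_ode_sol_def by auto
  then have "d = a0" and "k = a1 - r1 * a0"
    by (auto simp: F_def eq_diff_eq)
  with eq_on_nonneg_if_eq_on_pos[OF w' w_eq_F F' \<open>0 \<le> t\<close>]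
  show "w t = exp (r1 * of_real t) * (a0 + (a1 - r1 * a0) * exp_primitive (r2 - r1) t)"
    and "w1 t = r1 * w t + (a1 - r1 * a0) * exp (r2 * of_real t)"
    by (simp_all add: F_def)
qed

section \<open>The characteristic roots\<close>

(* The roots of z\<^sup>2 + b z + q, ordered by real part: exp (slow_root b q * t) is the slowest mode. *)
definition slow_root :: "real \<Rightarrow> real \<Rightarrow> complex" where
  "slow_root b q = (- of_real b + csqrt (of_real (b\<^sup>2 - 4 * q))) / 2"

definition fast_root :: "real \<Rightarrow> real \<Rightarrow> complex" where
  "fast_root b q = (- of_real b - csqrt (of_real (b\<^sup>2 - 4 * q))) / 2"

lemma slow_root_add_fast_root: "slow_root b q + fast_root b q = - of_real b"
  by (simp add: slow_root_def fast_root_def field_simps)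

lemma slow_root_mult_fast_root: "slow_root b q * fast_root b q = of_real q"
proof -
  have "slow_root b q * fast_root b q = (of_real b ^ 2 - csqrt (of_real (b\<^sup>2 - 4 * q)) ^ 2) / 4"
    by (simp add: slow_root_def fast_root_def field_simps power2_eq_square)
  then show ?thesis by simp
qed

lemma Re_csqrt_of_real: "Re (csqrt (of_real x)) = sqrt (max x 0)"
  by (simp add: csqrt_of_real' max_def)

lemma Re_slow_root: "Re (slow_root b q) = (- b + sqrt (max (b\<^sup>2 - 4 * q) 0)) / 2"
  using Re_csqrt_of_real[of "b\<^sup>2 - 4 * q"] by (simp add: slow_root_def del: csqrt.sel)

lemma Re_fast_root: "Re (fast_root b q) = (- b - sqrt (max (b\<^sup>2 - 4 * q) 0)) / 2"
  using Re_csqrt_of_real[of "b\<^sup>2 - 4 * q"] by (simp add: fast_root_def del: csqrt.sel)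

lemma norm_fast_root_minus_slow_root: "norm (fast_root b q - slow_root b q) = sqrt \<bar>b\<^sup>2 - 4 * q\<bar>"
proof -
  have "fast_root b q - slow_root b q = - csqrt (of_real (b\<^sup>2 - 4 * q))"
    by (simp add: slow_root_def fast_root_def field_simps)
  then show ?thesis by (simp only: norm_minus_cancel norm_csqrt norm_of_real)
qed

lemma norm_slow_root_le_fast_root:
  assumes "0 \<le> b"
  shows "norm (slow_root b q) \<le> norm (fast_root b q)"
proof (rule power2_le_imp_le)
  define z where "z = csqrt (of_real (b\<^sup>2 - 4 * q))"
  have "0 \<le> b * Re z" using assms Re_csqrt[of "of_real (b\<^sup>2 - 4 * q)"] unfolding z_def by simp
  then show "(norm (slow_root b q))\<^sup>2 \<le> (norm (fast_root b q))\<^sup>2"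
    unfolding cmod_power2 slow_root_def fast_root_def z_def [symmetric]
    by (simp add: power2_eq_square algebra_simps)
qed simp

lemma half_le_norm_fast_root:
  assumes "0 \<le> b"
  shows "b / 2 \<le> norm (fast_root b q)"
proof -
  have "0 \<le> sqrt (max (b\<^sup>2 - 4 * q) 0)" by simp
  then have "b / 2 \<le> - Re (fast_root b q)"
    unfolding Re_fast_root by argo
  also have "\<dots> \<le> \<bar>Re (fast_root b q)\<bar>" by simp
  also have "\<dots> \<le> norm (fast_root b q)" by (rule abs_Re_le_cmod)
  finally show ?thesis .
qed

lemma norm_slow_root_mult_fast_root:
  assumes "0 \<le> q"
  shows "norm (slow_root b q) * norm (fast_root b q) = q"
  using assms by (simp flip: norm_mult add: slow_root_mult_fast_root)

lemma norm_slow_root_le_sqrt: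
  assumes "0 \<le> b" and "0 \<le> q"
  shows "norm (slow_root b q) \<le> sqrt q"
proof (rule real_le_rsqrt)
  have "(norm (slow_root b q))\<^sup>2 \<le> norm (slow_root b q) * norm (fast_root b q)"
    unfolding power2_eq_square using norm_slow_root_le_fast_root[OF \<open>0 \<le> b\<close>]
    by (simp add: mult_left_mono)
  with norm_slow_root_mult_fast_root[OF \<open>0 \<le> q\<close>] show "(norm (slow_root b q))\<^sup>2 \<le> q"
    by simp
qed

lemma norm_slow_root_le_divide:
  assumes "0 < b" and "0 \<le> q"
  shows "norm (slow_root b q) \<le> 2 * q / b"
proof -
  have "norm (slow_root b q) * (b / 2) \<le> norm (slow_root b q) * norm (fast_root b q)"
    using \<open>0 < b\<close> by (intro mult_left_mono half_le_norm_fast_root) auto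
  with norm_slow_root_mult_fast_root[OF \<open>0 \<le> q\<close>] \<open>0 < b\<close> show ?thesis
    by (simp add: field_simps)
qed

lemma norm_exp_primitive_root_gap_le:
  fixes b q t :: real
  assumes "0 \<le> t"
  defines "G \<equiv> exp_primitive (fast_root b q - slow_root b q) t"
  shows "norm G \<le> t" and "sqrt \<bar>b\<^sup>2 - 4 * q\<bar> * norm G \<le> 2"
    and "sqrt (max (b\<^sup>2 - 4 * q) 0) * norm G \<le> 2"
proof -
  have "Re (fast_root b q - slow_root b q) \<le> 0"
    by (simp add: Re_slow_root Re_fast_root)
  then show "norm G \<le> t" and gap: "sqrt \<bar>b\<^sup>2 - 4 * q\<bar> * norm G \<le> 2"
    using norm_exp_primitive_le norm_mult_exp_primitive_le \<open>0 \<le> t\<close>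
    unfolding G_def norm_fast_root_minus_slow_root [symmetric] by blast+
  have "sqrt (max (b\<^sup>2 - 4 * q) 0) * norm G \<le> sqrt \<bar>b\<^sup>2 - 4 * q\<bar> * norm G"
    by (intro mult_right_mono) simp_all
  with gap show "sqrt (max (b\<^sup>2 - 4 * q) 0) * norm G \<le> 2"
    by linarith
qed

lemma sqrt_mult_norm_exp_primitive_root_gap_le:
  fixes b q t :: real
  assumes "0 \<le> b" and "0 \<le> q" and "0 \<le> t"
  defines "G \<equiv> exp_primitive (fast_root b q - slow_root b q) t"
  shows "sqrt q * norm G \<le> b / 2 * norm G + 1"
proof -
  have "sqrt q * norm G \<le> (b + sqrt \<bar>b\<^sup>2 - 4 * q\<bar>) / 2 * norm G"
    using sqrt_le_half_add_sqrt_abs[OF \<open>0 \<le> b\<close> \<open>0 \<le> q\<close>] by (rule mult_right_mono) simp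
  with norm_exp_primitive_root_gap_le(2)[OF \<open>0 \<le> t\<close>, of b q] show ?thesis
    by (simp add: G_def field_simps)
qed

lemma damped_ode_sol_norm_le:
  assumes sol: "damped_ode_sol b q a0 a1 w w1" and "0 \<le> t"
  defines "r1 \<equiv> slow_root b q" and "r2 \<equiv> fast_root b q"
  shows "cmod (w t) \<le> exp (Re r1 * t)
           * (cmod a0 + (cmod a1 + cmod r1 * cmod a0) * cmod (exp_primitive (r2 - r1) t))"
    and "cmod (w1 t) \<le> cmod r1 * cmod (w t) + (cmod a1 + cmod r1 * cmod a0) * exp (Re r2 * t)"
proof -
  define c where "c = a1 - r1 * a0"
  have c_le: "cmod c \<le> cmod a1 + cmod r1 * cmod a0"
    unfolding c_def by (metis norm_mult norm_triangle_ineq4)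
  note explicit = damped_ode_sol_explicit[OF slow_root_add_fast_root slow_root_mult_fast_root sol
      \<open>0 \<le> t\<close>, folded r1_def r2_def, folded c_def]
  have norm_exp: "cmod (exp (z * of_real t)) = exp (Re z * t)" for z
    by simp
  have "cmod (w t) \<le> exp (Re r1 * t) * (cmod a0 + cmod c * cmod (exp_primitive (r2 - r1) t))"
    unfolding explicit(1) norm_mult norm_exp
    by (intro mult_left_mono) (auto simp: norm_mult intro: norm_triangle_le)
  also have "\<dots> \<le> exp (Re r1 * t)
           * (cmod a0 + (cmod a1 + cmod r1 * cmod a0) * cmod (exp_primitive (r2 - r1) t))"
    using c_le by (intro mult_left_mono add_left_mono mult_right_mono) auto
  finally show "cmod (w t) \<le> exp (Re r1 * t)
           * (cmod a0 + (cmod a1 + cmod r1 * cmod a0) * cmod (exp_primitive (r2 - r1) t))" .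
  have "cmod (w1 t) \<le> cmod r1 * cmod (w t) + cmod c * exp (Re r2 * t)"
    unfolding explicit(2) by (metis norm_exp norm_mult norm_triangle_ineq)
  also have "\<dots> \<le> cmod r1 * cmod (w t) + (cmod a1 + cmod r1 * cmod a0) * exp (Re r2 * t)"
    using c_le by (intro add_left_mono mult_right_mono) auto
  finally show "cmod (w1 t) \<le> cmod r1 * cmod (w t) + (cmod a1 + cmod r1 * cmod a0) * exp (Re r2 * t)" .
qed

lemma overdamped_norm_le:
  fixes b s q t :: real
  assumes "0 < b" and "0 < s" and "0 \<le> q" and gap: "s\<^sup>2 \<le> b\<^sup>2 - 4 * q"
    and sol: "damped_ode_sol b q a0 a1 w w1" and "0 \<le> t"
  shows "cmod (w t) \<le> (1 + (b + 2) / s) * exp ((- b + sqrt (b\<^sup>2 - 4 * q)) * t / 2)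
                        * (cmod a0 + cmod a1)"
proof -
  define \<sigma> where "\<sigma> = sqrt (b\<^sup>2 - 4 * q)"
  define g x y where "g = cmod (exp_primitive (fast_root b q - slow_root b q) t)"
    and "x = cmod a0" and "y = cmod a1"
  have D: "0 \<le> b\<^sup>2 - 4 * q"
    using gap zero_le_power2[of s] by linarith
  have "s \<le> \<sigma>"
    unfolding \<sigma>_def using gap \<open>0 < s\<close> real_le_rsqrt by blast
  have "\<sigma> * g \<le> 2"
    using norm_exp_primitive_root_gap_le(3)[OF \<open>0 \<le> t\<close>, of b q] D by (simp add: \<sigma>_def g_def)
  moreover have "s * g \<le> \<sigma> * g"
    using \<open>s \<le> \<sigma>\<close> by (rule mult_right_mono) (simp add: g_def)
  ultimately have "g \<le> 2 / s"
    using \<open>0 < s\<close> by (simp add: field_simps)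
  have "sqrt q \<le> sqrt ((b / 2)\<^sup>2)"
    using D by (simp add: power_divide)
  then have "cmod (slow_root b q) \<le> b / 2"
    using norm_slow_root_le_sqrt[of b q] \<open>0 < b\<close> \<open>0 \<le> q\<close> by simp
  then have "x + (y + cmod (slow_root b q) * x) * g \<le> x + (y + b / 2 * x) * (2 / s)"
    using \<open>g \<le> 2 / s\<close> \<open>0 < b\<close>
    by (intro add_left_mono mult_mono add_left_mono mult_right_mono) (auto simp: x_def y_def g_def)
  also have "\<dots> \<le> (1 + (b + 2) / s) * (x + y)"
    using \<open>0 < s\<close> \<open>0 < b\<close> by (simp add: x_def y_def field_simps)
  finally have inner: "x + (y + cmod (slow_root b q) * x) * g \<le> (1 + (b + 2) / s) * (x + y)" .
  have Re_r1: "Re (slow_root b q) * t = (- b + \<sigma>) * t / 2"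
    using D by (simp add: Re_slow_root \<sigma>_def)
  have "cmod (w t) \<le> exp ((- b + \<sigma>) * t / 2) * (x + (y + cmod (slow_root b q) * x) * g)"
    using damped_ode_sol_norm_le(1)[OF sol \<open>0 \<le> t\<close>, unfolded Re_r1] by (simp add: x_def y_def g_def)
  also have "\<dots> \<le> exp ((- b + \<sigma>) * t / 2) * ((1 + (b + 2) / s) * (x + y))"
    using inner by (intro mult_left_mono) auto
  finally show ?thesis
    by (simp add: \<sigma>_def x_def y_def mult_ac)
qed

lemma overdamped_norm_derivative_le:
  fixes b s q t :: real
  assumes "0 < b" and "0 < s" and "0 \<le> q" and gap: "s\<^sup>2 \<le> b\<^sup>2 - 4 * q"
    and sol: "damped_ode_sol b q a0 a1 w w1" and "0 \<le> t"
  defines "A \<equiv> 1 + (b + 2) / s"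
    and "e1 \<equiv> exp ((- b + sqrt (b\<^sup>2 - 4 * q)) * t / 2)"
    and "e2 \<equiv> exp ((- b - sqrt (b\<^sup>2 - 4 * q)) * t / 2)"
  shows "cmod (w1 t) \<le> 2 * q / b * (A + 1) * e1 * (cmod a0 + cmod a1) + e2 * cmod a1"
proof -
  define x y where "x = cmod a0" and "y = cmod a1"
  have "0 \<le> x" "0 \<le> y" "0 \<le> e2" "0 \<le> 2 * q / b"
    using \<open>0 < b\<close> \<open>0 \<le> q\<close> by (simp_all add: x_def y_def e2_def)
  have r1_le: "cmod (slow_root b q) \<le> 2 * q / b"
    using \<open>0 < b\<close> \<open>0 \<le> q\<close> by (rule norm_slow_root_le_divide)
  have "0 \<le> b\<^sup>2 - 4 * q"
    using gap zero_le_power2[of s] by linarith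
  then have "exp (Re (fast_root b q) * t) = e2" and "e2 \<le> e1"
    using \<open>0 \<le> t\<close> by (simp_all add: Re_fast_root e1_def e2_def mult_right_mono)
  then have "cmod (w1 t) \<le> cmod (slow_root b q) * cmod (w t) + (y + cmod (slow_root b q) * x) * e2"
    using damped_ode_sol_norm_le(2)[OF sol \<open>0 \<le> t\<close>] by (simp add: x_def y_def)
  also have "\<dots> \<le> 2 * q / b * (A * e1 * (x + y)) + (y + 2 * q / b * x) * e2"
    using r1_le overdamped_norm_le[OF assms(1-6)] \<open>0 \<le> x\<close> \<open>0 \<le> e2\<close> \<open>0 \<le> 2 * q / b\<close>
    by (intro add_mono mult_mono add_left_mono mult_right_mono)
      (auto simp: A_def e1_def x_def y_def)
  also have "\<dots> \<le> 2 * q / b * (A + 1) * e1 * (x + y) + e2 * y"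
  proof -
    have "x * e2 \<le> (x + y) * e1"
      using \<open>e2 \<le> e1\<close> \<open>0 \<le> x\<close> \<open>0 \<le> y\<close> \<open>0 \<le> e2\<close> by (intro mult_mono) auto
    then have "2 * q / b * (x * e2) \<le> 2 * q / b * ((x + y) * e1)"
      using \<open>0 \<le> 2 * q / b\<close> by (rule mult_left_mono)
    then show ?thesis
      by (simp add: algebra_simps add_divide_distrib)
  qed
  finally show ?thesis
    by (simp add: x_def y_def)
qed

lemma weakly_damped_norm_le:
  fixes b s q t :: real
  assumes "0 < b" and "0 < s" and "0 \<le> q" and gap: "b\<^sup>2 - 4 * q \<le> s\<^sup>2"
    and sol: "damped_ode_sol b q a0 a1 w w1" and "0 \<le> t"
  defines "M \<equiv> (2 + b / 2) * (1 + 4 / s)" and "E \<equiv> exp ((- b + s) * t / 2)"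
    and "K \<equiv> sqrt q * cmod a0 + cmod a1"
  shows "sqrt q * cmod (w t) \<le> M * E * K"
proof -
  define \<sigma> where "\<sigma> = sqrt (max (b\<^sup>2 - 4 * q) 0)"
  define g x y where "g = cmod (exp_primitive (fast_root b q - slow_root b q) t)"
    and "x = cmod a0" and "y = cmod a1"
  have "0 \<le> \<sigma>" and "\<sigma> \<le> s"
    using gap \<open>0 < s\<close> by (auto simp: \<sigma>_def real_sqrt_le_iff')
  have "0 \<le> g" and "g \<le> t" and "\<sigma> * g \<le> 2"
    using norm_exp_primitive_root_gap_le[OF \<open>0 \<le> t\<close>, of b q] by (simp_all add: g_def \<sigma>_def)
  have sqrt_g: "sqrt q * g \<le> b / 2 * g + 1"
    unfolding g_def using \<open>0 < b\<close> \<open>0 \<le> q\<close> \<open>0 \<le> t\<close>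
    by (intro sqrt_mult_norm_exp_primitive_root_gap_le) simp_all
  have "0 \<le> K" and "sqrt q * x \<le> K" and "y + cmod (slow_root b q) * x \<le> K"
    using norm_slow_root_le_sqrt[of b q] \<open>0 < b\<close> \<open>0 \<le> q\<close>
    by (auto simp: K_def x_def y_def intro: mult_right_mono)
  have "sqrt q * (x + (y + cmod (slow_root b q) * x) * g)
      = sqrt q * x + (y + cmod (slow_root b q) * x) * (sqrt q * g)"
    by (simp add: algebra_simps)
  also have "\<dots> \<le> K + K * (b / 2 * g + 1)"
    using \<open>sqrt q * x \<le> K\<close> \<open>y + cmod (slow_root b q) * x \<le> K\<close> sqrt_g \<open>0 \<le> K\<close> \<open>0 \<le> g\<close> \<open>0 \<le> q\<close>
    by (intro add_mono mult_mono) auto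
  also have "\<dots> \<le> (2 + b / 2) * K * (1 + g)"
  proof -
    have "0 \<le> K * (2 * g + b / 2)"
      using \<open>0 \<le> K\<close> \<open>0 \<le> g\<close> \<open>0 < b\<close> by simp
    moreover have "(2 + b / 2) * K * (1 + g) = K + K * (b / 2 * g + 1) + K * (2 * g + b / 2)"
      by (simp add: algebra_simps)
    ultimately show ?thesis by linarith
  qed
  finally have inner: "sqrt q * (x + (y + cmod (slow_root b q) * x) * g) \<le> (2 + b / 2) * K * (1 + g)" .
  have exp_r1: "exp (Re (slow_root b q) * t) = exp (- b * t / 2) * exp (\<sigma> * t / 2)"
    by (simp add: Re_slow_root \<sigma>_def field_simps flip: exp_add)
  have "sqrt q * cmod (w t)
      \<le> sqrt q * (exp (- b * t / 2) * exp (\<sigma> * t / 2) * (x + (y + cmod (slow_root b q) * x) * g))"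
    using damped_ode_sol_norm_le(1)[OF sol \<open>0 \<le> t\<close>, unfolded exp_r1] \<open>0 \<le> q\<close>
    by (intro mult_left_mono) (auto simp: x_def y_def g_def)
  also have "\<dots> = exp (- b * t / 2) * (exp (\<sigma> * t / 2) * (sqrt q * (x + (y + cmod (slow_root b q) * x) * g)))"
    by (simp only: mult_ac)
  also have "\<dots> \<le> exp (- b * t / 2) * (2 + b / 2) * K * (exp (\<sigma> * t / 2) * (1 + g))"
    using inner by (simp add: mult_left_mono mult_ac)
  also have "\<dots> \<le> exp (- b * t / 2) * (2 + b / 2) * K * ((1 + 4 / s) * exp (s * t / 2))"
    using exp_mult_one_plus_le[OF \<open>0 < s\<close> \<open>0 \<le> \<sigma>\<close> \<open>\<sigma> \<le> s\<close> \<open>0 \<le> t\<close> \<open>0 \<le> g\<close> \<open>g \<le> t\<close> \<open>\<sigma> * g \<le> 2\<close>]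
      \<open>0 \<le> K\<close> \<open>0 < b\<close>
    by (intro mult_left_mono) auto
  also have "\<dots> = M * E * K"
    using \<open>0 < s\<close> by (simp add: M_def E_def field_simps flip: exp_add)
  finally show ?thesis .
qed

lemma weakly_damped_norm_derivative_le:
  fixes b s q t :: real
  assumes "0 < b" and "0 < s" and "0 \<le> q" and gap: "b\<^sup>2 - 4 * q \<le> s\<^sup>2"
    and sol: "damped_ode_sol b q a0 a1 w w1" and "0 \<le> t"
  defines "M \<equiv> (2 + b / 2) * (1 + 4 / s)" and "E \<equiv> exp ((- b + s) * t / 2)"
    and "K \<equiv> sqrt q * cmod a0 + cmod a1"
  shows "cmod (w1 t) \<le> (M + 1) * E * K"
proof -
  have r1_le: "cmod (slow_root b q) \<le> sqrt q"
    using \<open>0 < b\<close> \<open>0 \<le> q\<close> by (intro norm_slow_root_le_sqrt) auto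
  have "0 \<le> sqrt (max (b\<^sup>2 - 4 * q) 0)" by simp
  then have "Re (fast_root b q) \<le> (- b + s) / 2"
    using \<open>0 < s\<close> unfolding Re_fast_root by argo
  then have "Re (fast_root b q) * t \<le> (- b + s) / 2 * t"
    using \<open>0 \<le> t\<close> by (rule mult_right_mono)
  then have "exp (Re (fast_root b q) * t) \<le> E"
    by (simp add: E_def)
  moreover have "0 \<le> K" and "cmod a1 + cmod (slow_root b q) * cmod a0 \<le> K"
    using r1_le \<open>0 \<le> q\<close> by (auto simp: K_def intro: mult_right_mono)
  moreover have "cmod (w1 t) \<le> cmod (slow_root b q) * cmod (w t)
      + (cmod a1 + cmod (slow_root b q) * cmod a0) * exp (Re (fast_root b q) * t)"
    using sol \<open>0 \<le> t\<close> by (rule damped_ode_sol_norm_le(2))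
  ultimately have "cmod (w1 t) \<le> sqrt q * cmod (w t) + K * E"
    using r1_le by (meson add_mono mult_mono mult_right_mono norm_ge_zero exp_ge_zero order_trans)
  also have "\<dots> \<le> (M + 1) * E * K"
    using weakly_damped_norm_le[OF assms(1-6)] by (simp add: M_def E_def K_def algebra_simps)
  finally show ?thesis .
qed

section \<open>Energy decay\<close>

lemma overdamped_decay:
  fixes b s :: real
  assumes "0 < b" and "0 < s"
  shows "\<exists>C>0. \<forall>q a0 a1 w w1 t. 0 \<le> q \<and> s\<^sup>2 \<le> b\<^sup>2 - 4 * q \<and> damped_ode_sol b q a0 a1 w w1 \<and> 0 \<le> t \<longrightarrow>
    (cmod (w t))\<^sup>2 \<le> C * (exp ((- b + sqrt (b\<^sup>2 - 4 * q)) * t) * ((cmod a0)\<^sup>2 + (cmod a1)\<^sup>2)) \<and>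
    (cmod (w1 t))\<^sup>2 \<le> C * (exp ((- b + sqrt (b\<^sup>2 - 4 * q)) * t) * q\<^sup>2 * ((cmod a0)\<^sup>2 + (cmod a1)\<^sup>2)
                         + exp ((- b - sqrt (b\<^sup>2 - 4 * q)) * t) * (cmod a1)\<^sup>2)"
proof -
  define A where "A = 1 + (b + 2) / s"
  define C where "C = 2 * A\<^sup>2 + 16 * (A + 1)\<^sup>2 / b\<^sup>2 + 2"
  show ?thesis
  proof (intro exI[of _ C] conjI allI impI)
    show "0 < C" by (simp add: C_def add_nonneg_pos)
    fix q t :: real and a0 a1 :: complex and w w1 :: "real \<Rightarrow> complex"
    assume "0 \<le> q \<and> s\<^sup>2 \<le> b\<^sup>2 - 4 * q \<and> damped_ode_sol b q a0 a1 w w1 \<and> 0 \<le> t"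
    then have "0 \<le> q" and gap: "s\<^sup>2 \<le> b\<^sup>2 - 4 * q"
      and sol: "damped_ode_sol b q a0 a1 w w1" and "0 \<le> t" by auto
    define \<sigma> k where "\<sigma> = sqrt (b\<^sup>2 - 4 * q)" and "k = 2 * q / b * (A + 1)"
    define e1 e2 where "e1 = exp ((- b + \<sigma>) * t / 2)" and "e2 = exp ((- b - \<sigma>) * t / 2)"
    define x y where "x = cmod a0" and "y = cmod a1"
    note bounds = overdamped_norm_le[OF \<open>0 < b\<close> \<open>0 < s\<close> \<open>0 \<le> q\<close> gap sol \<open>0 \<le> t\<close>]
        overdamped_norm_derivative_le[OF \<open>0 < b\<close> \<open>0 < s\<close> \<open>0 \<le> q\<close> gap sol \<open>0 \<le> t\<close>]
    note bounds = bounds[folded \<sigma>_def A_def, folded e1_def e2_def x_def y_def k_def]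
    have "0 \<le> k * e1 * (x + y)"
      using \<open>0 < b\<close> \<open>0 < s\<close> \<open>0 \<le> q\<close> by (simp add: k_def A_def e1_def x_def y_def)
    have "(cmod (w t))\<^sup>2 \<le> 2 * (A * e1)\<^sup>2 * (x\<^sup>2 + y\<^sup>2)"
      using bounds(1) by (intro power2_le_of_le_mult_add) (simp_all add: mult.assoc)
    also have "\<dots> \<le> C * (e1\<^sup>2 * (x\<^sup>2 + y\<^sup>2))"
      by (simp add: C_def power_mult_distrib mult_right_mono flip: mult.assoc)
    finally show "(cmod (w t))\<^sup>2 \<le> C * (exp ((- b + sqrt (b\<^sup>2 - 4 * q)) * t) * ((cmod a0)\<^sup>2 + (cmod a1)\<^sup>2))"
      by (simp add: e1_def \<sigma>_def x_def y_def exp_half_squared)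
    have "(cmod (w1 t))\<^sup>2 \<le> (k * e1 * (x + y) + e2 * y)\<^sup>2"
      using bounds(2) by (intro power_mono) simp_all
    also have "\<dots> \<le> 2 * ((k * e1 * (x + y))\<^sup>2 + (e2 * y)\<^sup>2)"
      by (rule power2_add_le)
    also have "\<dots> \<le> 2 * (2 * (k * e1)\<^sup>2 * (x\<^sup>2 + y\<^sup>2) + (e2 * y)\<^sup>2)"
      using power2_le_of_le_mult_add[OF \<open>0 \<le> k * e1 * (x + y)\<close>, of "k * e1" x y] by simp
    also have "\<dots> = 16 * (A + 1)\<^sup>2 / b\<^sup>2 * (e1\<^sup>2 * q\<^sup>2 * (x\<^sup>2 + y\<^sup>2)) + 2 * (e2\<^sup>2 * y\<^sup>2)"
      by (simp add: k_def power_mult_distrib power_divide)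
    also have "\<dots> \<le> C * (e1\<^sup>2 * q\<^sup>2 * (x\<^sup>2 + y\<^sup>2)) + C * (e2\<^sup>2 * y\<^sup>2)"
      by (intro add_mono mult_right_mono) (auto simp: C_def)
    finally show "(cmod (w1 t))\<^sup>2 \<le> C * (exp ((- b + sqrt (b\<^sup>2 - 4 * q)) * t) * q\<^sup>2 * ((cmod a0)\<^sup>2 + (cmod a1)\<^sup>2)
                         + exp ((- b - sqrt (b\<^sup>2 - 4 * q)) * t) * (cmod a1)\<^sup>2)"
      by (simp add: e1_def e2_def \<sigma>_def x_def y_def exp_half_squared distrib_left)
  qed
qed

lemma weakly_damped_decay:
  fixes b s :: real
  assumes "0 < b" and "0 < s"
  shows "\<exists>C>0. \<forall>q a0 a1 w w1 t. 0 \<le> q \<and> b\<^sup>2 - 4 * q \<le> s\<^sup>2 \<and> damped_ode_sol b q a0 a1 w w1 \<and> 0 \<le> t \<longrightarrow>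
    q * (cmod (w t))\<^sup>2 \<le> C * (exp ((- b + s) * t) * (q * (cmod a0)\<^sup>2 + (cmod a1)\<^sup>2)) \<and>
    (cmod (w1 t))\<^sup>2 \<le> C * (exp ((- b + s) * t) * (q * (cmod a0)\<^sup>2 + (cmod a1)\<^sup>2))"
proof -
  define M where "M = (2 + b / 2) * (1 + 4 / s)"
  have "0 \<le> M"
    using \<open>0 < b\<close> \<open>0 < s\<close> by (simp add: M_def)
  show ?thesis
  proof (intro exI[of _ "2 * (M + 1)\<^sup>2"] conjI allI impI)
    show "0 < 2 * (M + 1)\<^sup>2"
      using \<open>0 \<le> M\<close> by simp
    fix q t :: real and a0 a1 :: complex and w w1 :: "real \<Rightarrow> complex"
    assume "0 \<le> q \<and> b\<^sup>2 - 4 * q \<le> s\<^sup>2 \<and> damped_ode_sol b q a0 a1 w w1 \<and> 0 \<le> t"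
    then have "0 \<le> q" and gap: "b\<^sup>2 - 4 * q \<le> s\<^sup>2"
      and sol: "damped_ode_sol b q a0 a1 w w1" and "0 \<le> t" by auto
    define E where "E = exp ((- b + s) * t / 2)"
    have square: "z\<^sup>2 \<le> 2 * (M + 1)\<^sup>2 * (exp ((- b + s) * t) * (q * (cmod a0)\<^sup>2 + (cmod a1)\<^sup>2))"
      if "0 \<le> z" and "z \<le> c * E * (sqrt q * cmod a0 + cmod a1)" and "0 \<le> c" and "c \<le> M + 1" for z c
    proof -
      have "z\<^sup>2 \<le> 2 * (c * E)\<^sup>2 * ((sqrt q * cmod a0)\<^sup>2 + (cmod a1)\<^sup>2)"
        using that by (intro power2_le_of_le_mult_add) (simp_all add: mult.assoc)
      also have "\<dots> \<le> 2 * (M + 1)\<^sup>2 * (exp ((- b + s) * t) * (q * (cmod a0)\<^sup>2 + (cmod a1)\<^sup>2))"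
        using that \<open>0 \<le> q\<close> by (simp add: E_def power_mult_distrib exp_half_squared mult_right_mono
            power_mono flip: mult.assoc)
      finally show ?thesis .
    qed
    have "q * (cmod (w t))\<^sup>2 = (sqrt q * cmod (w t))\<^sup>2"
      using \<open>0 \<le> q\<close> by (simp add: power_mult_distrib)
    then show "q * (cmod (w t))\<^sup>2 \<le> 2 * (M + 1)\<^sup>2 * (exp ((- b + s) * t) * (q * (cmod a0)\<^sup>2 + (cmod a1)\<^sup>2))"
      using square[OF _ weakly_damped_norm_le[OF \<open>0 < b\<close> \<open>0 < s\<close> \<open>0 \<le> q\<close> gap sol \<open>0 \<le> t\<close>,
            folded M_def E_def]] \<open>0 \<le> q\<close> \<open>0 \<le> M\<close> by simp
    show "(cmod (w1 t))\<^sup>2 \<le> 2 * (M + 1)\<^sup>2 * (exp ((- b + s) * t) * (q * (cmod a0)\<^sup>2 + (cmod a1)\<^sup>2))"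
      using square[OF _ weakly_damped_norm_derivative_le[OF \<open>0 < b\<close> \<open>0 < s\<close> \<open>0 \<le> q\<close> gap sol
            \<open>0 \<le> t\<close>, folded M_def E_def]] \<open>0 \<le> M\<close> by simp
  qed
qed

lemma unweighted_energy_bounds:
  fixes \<theta> L m c C u x y :: real
  assumes "0 < \<theta>" and "\<theta> \<le> L" and "0 \<le> m" and "0 \<le> c" and "0 \<le> u" and "0 \<le> x" and "0 \<le> y"
    and weighted: "(L + m) * u \<le> c * ((L + m) * x + y)"
    and C: "c * (1 + (1 + m) / \<theta>) \<le> C"
  shows "u \<le> C * (x + y)" and "L * u \<le> C * (L * x + y)"
proof -
  define \<kappa> where "\<kappa> = 1 + (1 + m) / \<theta>"
  have "1 \<le> L / \<theta>" and "0 < L + m"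
    using assms by simp_all
  moreover have "m * 1 \<le> m * (L / \<theta>)"
    using \<open>1 \<le> L / \<theta>\<close> \<open>0 \<le> m\<close> by (rule mult_left_mono)
  ultimately have "1 * y \<le> L / \<theta> * y" and "m * x \<le> m * (L / \<theta>) * x"
    using assms by (intro mult_right_mono; simp)+
  then have "y \<le> (L + m) * ((1 + m) / \<theta>) * y" and "m * x \<le> (1 + m) / \<theta> * L * x"
    using assms by (auto simp: field_simps intro: order_trans mult_right_mono)
  moreover have "(L + m) * (\<kappa> * (x + y))
      = (L + m) * x + (L + m) * ((1 + m) / \<theta>) * y + ((L + m) * y + (L + m) * ((1 + m) / \<theta>) * x)"
    and "\<kappa> * (L * x + y) = L * x + y + (1 + m) / \<theta> * L * x + (1 + m) / \<theta> * y"
    and "(L + m) * x = L * x + m * x"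
    by (simp_all add: \<kappa>_def algebra_simps add_divide_distrib)
  moreover have "0 \<le> (L + m) * y + (L + m) * ((1 + m) / \<theta>) * x" and "0 \<le> (1 + m) / \<theta> * y"
    using assms \<open>0 < L + m\<close> by simp_all
  ultimately have weight_1: "(L + m) * x + y \<le> (L + m) * (\<kappa> * (x + y))"
    and weight_L: "(L + m) * x + y \<le> \<kappa> * (L * x + y)"
    by linarith+
  have "(L + m) * u \<le> (L + m) * (c * \<kappa> * (x + y))"
    using order_trans[OF weighted mult_left_mono[OF weight_1 \<open>0 \<le> c\<close>]] by (simp add: mult_ac)
  then have "u \<le> c * \<kappa> * (x + y)"
    using \<open>0 < L + m\<close> by simp
  with C show "u \<le> C * (x + y)"
    using \<open>0 \<le> x\<close> \<open>0 \<le> y\<close> by (metis \<kappa>_def order_trans add_nonneg_nonneg mult_right_mono)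
  have "L * u \<le> (L + m) * u"
    using assms by (simp add: mult_right_mono)
  also have "\<dots> \<le> c * \<kappa> * (L * x + y)"
    using order_trans[OF weighted mult_left_mono[OF weight_L \<open>0 \<le> c\<close>]] by (simp add: mult_ac)
  also have "\<dots> \<le> C * (L * x + y)"
    using C assms by (intro mult_right_mono) (simp_all add: \<kappa>_def)
  finally show "L * u \<le> C * (L * x + y)" .
qed

lemma abs_less_powr_threshold_iff:
  fixes lam \<mu> \<alpha> \<theta> :: real
  assumes "0 < \<mu>" and "0 < \<alpha>" and "0 < \<theta>"
  shows "\<bar>lam\<bar> < 1 / \<mu> * \<theta> powr (1 / \<alpha>) \<longleftrightarrow> \<bar>lam\<bar> powr \<alpha> * \<mu> powr \<alpha> < \<theta>"
    and "1 / \<mu> * \<theta> powr (1 / \<alpha>) < \<bar>lam\<bar> \<longleftrightarrow> \<theta> < \<bar>lam\<bar> powr \<alpha> * \<mu> powr \<alpha>"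
proof -
  have powr_less_iff: "x < y \<longleftrightarrow> x powr \<alpha> < y powr \<alpha>" if "0 \<le> x" "0 \<le> y" for x y :: real
    using that \<open>0 < \<alpha>\<close> by (metis not_le powr_less_mono2 powr_mono2 less_imp_le)
  have \<theta>: "(\<theta> powr (1 / \<alpha>)) powr \<alpha> = \<theta>"
    using assms by (simp add: powr_powr)
  have lam: "(\<bar>lam\<bar> * \<mu>) powr \<alpha> = \<bar>lam\<bar> powr \<alpha> * \<mu> powr \<alpha>"
    by (rule powr_mult)
  have div: "\<bar>lam\<bar> < 1 / \<mu> * X \<longleftrightarrow> \<bar>lam\<bar> * \<mu> < X" "1 / \<mu> * X < \<bar>lam\<bar> \<longleftrightarrow> X < \<bar>lam\<bar> * \<mu>"
    for X
    using \<open>0 < \<mu>\<close> by (auto simp: field_simps)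
  show "\<bar>lam\<bar> < 1 / \<mu> * \<theta> powr (1 / \<alpha>) \<longleftrightarrow> \<bar>lam\<bar> powr \<alpha> * \<mu> powr \<alpha> < \<theta>"
    unfolding div using powr_less_iff[of "\<bar>lam\<bar> * \<mu>" "\<theta> powr (1 / \<alpha>)"] \<open>0 < \<mu>\<close>
    by (simp add: \<theta> lam)
  show "1 / \<mu> * \<theta> powr (1 / \<alpha>) < \<bar>lam\<bar> \<longleftrightarrow> \<theta> < \<bar>lam\<bar> powr \<alpha> * \<mu> powr \<alpha>"
    unfolding div using powr_less_iff[of "\<theta> powr (1 / \<alpha>)" "\<bar>lam\<bar> * \<mu>"] \<open>0 < \<mu>\<close>
    by (simp add: \<theta> lam)
qed

(* Stated for every C above a threshold so that the two frequency regimes can share one constant. *)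
lemma small_frequency_decay:
  fixes b m :: real
  assumes "0 < b" and "0 \<le> m" and "4 * m < b\<^sup>2"
  shows "\<exists>C0>0. \<forall>C\<ge>C0. \<forall>L a0 a1 w w1 t.
    0 \<le> L \<and> L < (1/2) * (b\<^sup>2 / 4 - m) \<and> damped_ode_sol b (L + m) a0 a1 w w1 \<and> 0 \<le> t \<longrightarrow>
        (cmod (w t))\<^sup>2 \<le> C * exp ((- b + sqrt (b\<^sup>2 - 4 * m - 4 * L)) * t) * ((cmod a0)\<^sup>2 + (cmod a1)\<^sup>2)
      \<and> (cmod (w1 t))\<^sup>2 \<le> C * (exp ((- b + sqrt (b\<^sup>2 - 4 * m - 4 * L)) * t) * (L + m)\<^sup>2
                              * ((cmod a0)\<^sup>2 + (cmod a1)\<^sup>2)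
                            + exp ((- b - sqrt (b\<^sup>2 - 4 * m - 4 * L)) * t) * (cmod a1)\<^sup>2)
      \<and> L * (cmod (w t))\<^sup>2 \<le> C * exp ((- b + sqrt (b\<^sup>2 - 4 * m - 4 * L)) * t) * L
                              * ((cmod a0)\<^sup>2 + (cmod a1)\<^sup>2)"
proof -
  define s where "s = sqrt ((1/2) * (b\<^sup>2 - 4 * m))"
  have "0 < s" and s2: "s\<^sup>2 = (1/2) * (b\<^sup>2 - 4 * m)"
    using assms by (simp_all add: s_def)
  from overdamped_decay[OF \<open>0 < b\<close> \<open>0 < s\<close>] show ?thesis
  proof (elim exE conjE, goal_cases)
    case (1 CA)
    note overdamped = "1"(2)[rule_format]
    show ?case
    proof (rule exI[of _ CA], rule conjI[OF "1"(1)], intro allI impI, goal_cases)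
      case (1 C L a0 a1 w w1 t)
      then have "0 \<le> L" and "L < (1/2) * (b\<^sup>2 / 4 - m)" and sol: "damped_ode_sol b (L + m) a0 a1 w w1"
        and "0 \<le> t" and "CA \<le> C" by auto
      define Ep Em N where "Ep = exp ((- b + sqrt (b\<^sup>2 - 4 * m - 4 * L)) * t)"
        and "Em = exp ((- b - sqrt (b\<^sup>2 - 4 * m - 4 * L)) * t)"
        and "N = (cmod a0)\<^sup>2 + (cmod a1)\<^sup>2"
      have "s\<^sup>2 \<le> b\<^sup>2 - 4 * (L + m)"
        using s2 \<open>L < (1/2) * (b\<^sup>2 / 4 - m)\<close> by simp
      with \<open>0 \<le> L\<close> \<open>0 \<le> m\<close> sol \<open>0 \<le> t\<close> have "(cmod (w t))\<^sup>2 \<le> CA * (Ep * N)"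
        and "(cmod (w1 t))\<^sup>2 \<le> CA * (Ep * (L + m)\<^sup>2 * N + Em * (cmod a1)\<^sup>2)"
        using overdamped[of "L + m" a0 a1 w w1 t] by (simp_all add: Ep_def Em_def N_def algebra_simps)
      moreover have "CA * (Ep * N) \<le> C * (Ep * N)"
        and "CA * (Ep * (L + m)\<^sup>2 * N + Em * (cmod a1)\<^sup>2) \<le> C * (Ep * (L + m)\<^sup>2 * N + Em * (cmod a1)\<^sup>2)"
        using \<open>CA \<le> C\<close> by (intro mult_right_mono; simp add: Ep_def Em_def N_def)+
      ultimately have "(cmod (w t))\<^sup>2 \<le> C * Ep * N"
        and "(cmod (w1 t))\<^sup>2 \<le> C * (Ep * (L + m)\<^sup>2 * N + Em * (cmod a1)\<^sup>2)"
        by (simp_all only: mult.assoc)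
      moreover from this(1) have "L * (cmod (w t))\<^sup>2 \<le> C * Ep * L * N"
        using mult_left_mono[of _ _ L] \<open>0 \<le> L\<close> by (fastforce simp: mult_ac)
      ultimately show ?case
        by (simp add: Ep_def Em_def N_def)
    qed
  qed
qed

lemma large_frequency_decay:
  fixes b m :: real
  assumes "0 < b" and "0 \<le> m" and "4 * m < b\<^sup>2"
  defines "\<theta> \<equiv> (1/2) * (b\<^sup>2 / 4 - m)" and "s \<equiv> sqrt ((1/2) * (b\<^sup>2 - 4 * m))"
  shows "\<exists>C0>0. \<forall>C\<ge>C0. \<forall>L a0 a1 w w1 t.
    \<theta> < L \<and> damped_ode_sol b (L + m) a0 a1 w w1 \<and> 0 \<le> t \<longrightarrow>
        (cmod (w t))\<^sup>2 \<le> C * exp ((- b + s) * t) * ((cmod a0)\<^sup>2 + (cmod a1)\<^sup>2)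
      \<and> (cmod (w1 t))\<^sup>2 \<le> C * exp ((- b + s) * t) * ((L + m) * (cmod a0)\<^sup>2 + (cmod a1)\<^sup>2)
      \<and> L * (cmod (w t))\<^sup>2 \<le> C * exp ((- b + s) * t) * (L * (cmod a0)\<^sup>2 + (cmod a1)\<^sup>2)"
proof -
  have "0 < \<theta>" and "0 < s"
    using assms by (simp_all add: \<theta>_def s_def)
  have s2: "s\<^sup>2 = b\<^sup>2 - 4 * m - 4 * \<theta>"
    using assms by (simp add: \<theta>_def s_def field_simps)
  from weakly_damped_decay[OF \<open>0 < b\<close> \<open>0 < s\<close>] show ?thesis
  proof (elim exE conjE, goal_cases)
    case (1 CB)
    note weakly_damped = "1"(2)[rule_format]
    have "0 < CB * (1 + (1 + m) / \<theta>)"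
      using \<open>0 < CB\<close> \<open>0 < \<theta>\<close> \<open>0 \<le> m\<close> by (simp add: add_pos_nonneg)
    then show ?case
    proof (rule exI[of _ "CB * (1 + (1 + m) / \<theta>)", OF conjI], intro allI impI, goal_cases)
      case (1 C L a0 a1 w w1 t)
      then have "\<theta> < L" and sol: "damped_ode_sol b (L + m) a0 a1 w w1" and "0 \<le> t"
        and C: "CB * (1 + (1 + m) / \<theta>) \<le> C" by auto
      define Eh x y where "Eh = exp ((- b + s) * t)" and "x = (cmod a0)\<^sup>2" and "y = (cmod a1)\<^sup>2"
      have "0 \<le> Eh" "0 \<le> x" "0 \<le> y" "0 \<le> L + m"
        using \<open>\<theta> < L\<close> \<open>0 < \<theta>\<close> \<open>0 \<le> m\<close> by (simp_all add: Eh_def x_def y_def)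
      have "CB * 1 \<le> CB * (1 + (1 + m) / \<theta>)"
        using \<open>0 < CB\<close> \<open>0 < \<theta>\<close> \<open>0 \<le> m\<close> by (intro mult_left_mono) simp_all
      with C have "CB \<le> C"
        by simp
      have "b\<^sup>2 - 4 * (L + m) \<le> s\<^sup>2"
        using s2 \<open>\<theta> < L\<close> by simp
      with \<open>0 \<le> L + m\<close> sol \<open>0 \<le> t\<close>
      have weighted: "(L + m) * (cmod (w t))\<^sup>2 \<le> CB * Eh * ((L + m) * x + y)"
        and w1: "(cmod (w1 t))\<^sup>2 \<le> CB * (Eh * ((L + m) * x + y))"
        using weakly_damped[of "L + m" a0 a1 w w1 t] by (simp_all add: Eh_def x_def y_def mult.assoc)
      have "CB * (1 + (1 + m) / \<theta>) * Eh \<le> C * Eh"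
        using C \<open>0 \<le> Eh\<close> by (rule mult_right_mono)
      then have "CB * Eh * (1 + (1 + m) / \<theta>) \<le> C * Eh"
        by (simp only: mult_ac)
      from unweighted_energy_bounds[OF \<open>0 < \<theta>\<close> less_imp_le[OF \<open>\<theta> < L\<close>] \<open>0 \<le> m\<close> _ zero_le_power2
          \<open>0 \<le> x\<close> \<open>0 \<le> y\<close> weighted this]
      have "(cmod (w t))\<^sup>2 \<le> C * Eh * (x + y)" and "L * (cmod (w t))\<^sup>2 \<le> C * Eh * (L * x + y)"
        using \<open>0 < CB\<close> \<open>0 \<le> Eh\<close> by simp_all
      moreover have "(cmod (w1 t))\<^sup>2 \<le> C * Eh * ((L + m) * x + y)"
        using order_trans[OF w1 mult_right_mono[OF \<open>CB \<le> C\<close>]] \<open>0 \<le> Eh\<close> \<open>0 \<le> x\<close> \<open>0 \<le> y\<close>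
          \<open>0 \<le> L + m\<close>
        by (simp add: mult.assoc)
      ultimately show ?case
        by (simp add: Eh_def x_def y_def)
    qed
  qed
qed

theorem lemma3p1:
  fixes b m \<alpha> :: real and n :: nat
  assumes "b > 0" and "m \<ge> 0" and "b\<^sup>2 > 4 * m" and "\<alpha> > 0" and "n \<ge> 1"
  shows "\<exists>C>0. \<forall>(lam::real) (k::nat list) (a0::complex) (a1::complex)
      (w::real \<Rightarrow> complex) (w1::real \<Rightarrow> complex) (t::real).
    lam \<noteq> 0 \<and> length k = n \<and> t \<ge> 0 \<and>
    damped_ode_sol b (\<bar>lam\<bar> powr \<alpha> * hermite_mu n k powr \<alpha> + m) a0 a1 w w1 \<longrightarrow>
    (let \<mu> = hermite_mu n k;
         L = \<bar>lam\<bar> powr \<alpha> * \<mu> powr \<alpha>;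
         T = (1 / \<mu>) * ((1/2) * (b\<^sup>2 / 4 - m)) powr (1 / \<alpha>);
         N = (cmod a0)\<^sup>2 + (cmod a1)\<^sup>2;
         Ep = exp ((- b + sqrt (b\<^sup>2 - 4 * m - 4 * L)) * t);
         Em = exp ((- b - sqrt (b\<^sup>2 - 4 * m - 4 * L)) * t);
         Eh = exp ((- b + sqrt ((1/2) * (b\<^sup>2 - 4 * m))) * t);
         P = (\<bar>lam\<bar> * \<mu>) powr (\<alpha> / 2)
     in (\<bar>lam\<bar> < T \<longrightarrow>
           (cmod (w t))\<^sup>2 \<le> C * Ep * N
         \<and> (cmod (w1 t))\<^sup>2 \<le> C * (Ep * (L + m)\<^sup>2 * N + Em * (cmod a1)\<^sup>2)
         \<and> (cmod (complex_of_real P * w t))\<^sup>2 \<le> C * Ep * (\<bar>lam\<bar> * \<mu>) powr \<alpha> * N)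
      \<and> (\<bar>lam\<bar> > T \<longrightarrow>
           (cmod (w t))\<^sup>2 \<le> C * Eh * N
         \<and> (cmod (w1 t))\<^sup>2 \<le> C * Eh * ((L + m) * (cmod a0)\<^sup>2 + (cmod a1)\<^sup>2)
         \<and> (cmod (complex_of_real P * w t))\<^sup>2 \<le> C * Eh * (L * (cmod a0)\<^sup>2 + (cmod a1)\<^sup>2)))"
proof -
  define \<theta> where "\<theta> = (1/2) * (b\<^sup>2 / 4 - m)"
  have "0 < \<theta>"
    using assms by (simp add: \<theta>_def)
  from small_frequency_decay[OF assms(1-3)] large_frequency_decay[OF assms(1-3)] show ?thesis
  proof (elim exE conjE, goal_cases)
    case (1 C1 C2)
    note small = "1"(2)[rule_format, of "max C1 C2", folded \<theta>_def]
      and large = "1"(4)[rule_format, of "max C1 C2", folded \<theta>_def]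
    show ?case
    proof (rule exI[of _ "max C1 C2"], intro conjI allI impI, goal_cases)
      case 1
      show ?case using \<open>0 < C1\<close> by simp
    next
      case (2 lam k a0 a1 w w1 t)
      define \<mu> L where "\<mu> = hermite_mu n k" and "L = \<bar>lam\<bar> powr \<alpha> * \<mu> powr \<alpha>"
      have "0 < \<mu>"
        using \<open>n \<ge> 1\<close> by (simp add: \<mu>_def hermite_mu_def add_nonneg_pos)
      have L_eq: "(\<bar>lam\<bar> * \<mu>) powr \<alpha> = L"
        by (simp add: L_def powr_mult)
      have "(cmod (of_real ((\<bar>lam\<bar> * \<mu>) powr (\<alpha> / 2)) * w t))\<^sup>2 = L * (cmod (w t))\<^sup>2"
        by (simp add: norm_mult power_mult_distrib power2_eq_square L_eq [symmetric]
            flip: powr_add)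
      with small[of L a0 a1 w w1 t] large[of L a0 a1 w w1 t] "2"
        abs_less_powr_threshold_iff[OF \<open>0 < \<mu>\<close> \<open>0 < \<alpha>\<close> \<open>0 < \<theta>\<close>, of lam]
      show ?case
        unfolding Let_def \<mu>_def [symmetric] L_def [symmetric] \<theta>_def [symmetric] L_eq
        by (simp add: L_def)
    qed
  qed
qed

end
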